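(* Let $N>0$, $d>0$ be real numbers with $0<N<1$ and $d^{2}\leq N^{-2}-1$. For every real $A>0$, the equation $F(z)+A=0$, where $F(z)=(1-Nz)^{2}\left(1-\frac{d^{2}}{z^{2}-1}\right)$, i.e. the quartic equation $(1-Nz)^{2}(z^{2}-1-d^{2})+A(z^{2}-1)=0$ in the complex variable $z$, has exactly two real roots and two (non-real) complex roots.
   Context: This is the (dimensionless) dispersion relation for Kelvin–Helmholtz perturbations of two thin co-flowing layers (a pure incompressible fluid and a bubbly fluid): $z=ad/(u_{20}-c)$ with $c$ the phase velocity, $d=1/(bk)$ the dimensionless wave length, $N=M/d$ with $M=(u_{20}-u_{10})/a$, and $A=h_0\rho_{20}/((H_0-h_0)\rho_{10})>0$. The equation $F(z)+A=0$ is regarded as the fourth-degree polynomial equation obtained by multiplying by $z^{2}-1$; roots are counted with multiplicity. *)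

theory Defs
  imports Complex_Main "HOL-Computational_Algebra.Polynomial"
begin

definition kh_quartic :: "real \<Rightarrow> real \<Rightarrow> real \<Rightarrow> complex poly" where
  "kh_quartic N d A =
     [:1, - complex_of_real N:] ^ 2 * [:- complex_of_real (1 + d^2), 0, 1:]
     + smult (complex_of_real A) [:-1, 0, 1:]"

end

theory Submission
  imports Defs "HOL-Computational_Algebra.Fundamental_Theorem_Algebra"
begin

text \<open>Write P for the quartic as a real polynomial. P is negative on [-1, 1] and positive where
  x^2 \<ge> 1 + d^2, so it has a root in each of (-sqrt (1 + d^2), -1) and (1, sqrt (1 + d^2)), and
  every real root lies there. The identity (x^2 - 1) P' - 2 x P = 2 (1 - N x) (d^2 (x - N) - N (x^2 - 1)^2)
  shows that P' is negative at every negative root and, when N^2 (1 + d^2) \<le> 1, positive at every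
  positive root. A polynomial that crosses zero in the same direction at each of its roots in an
  interval has at most one root there, so there are exactly two real roots, both simple; the
  remaining multiplicity 2 of the degree-4 polynomial belongs to non-real roots.\<close>

lemma poly_map_poly_of_real: "poly (map_poly of_real p) (of_real x) = (of_real (poly p x) :: complex)"
  by (induction p) (auto simp: map_poly_pCons)

lemma pderiv_map_poly_of_real: "pderiv (map_poly of_real p) = (map_poly of_real (pderiv p) :: complex poly)"
  by (rule poly_eqI) (simp add: coeff_pderiv coeff_map_poly of_real_mult)

lemma no_two_roots_if_pderiv_pos_at_roots:
  fixes p :: "real poly"
  assumes "p \<noteq> 0" "x < y" "poly p x = 0" "poly p y = 0"
    and pderiv_pos: "\<And>z. x \<le> z \<Longrightarrow> z \<le> y \<Longrightarrow> poly p z = 0 \<Longrightarrow> poly (pderiv p) z > 0"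
  shows False
proof -
  define Z where "Z = {z. x < z \<and> z \<le> y \<and> poly p z = 0}"
  have "finite Z"
    unfolding Z_def using poly_roots_finite[OF \<open>p \<noteq> 0\<close>] by (rule rev_finite_subset) auto
  moreover have "y \<in> Z" unfolding Z_def using assms by simp
  ultimately have c: "Min Z \<in> Z" and c_min: "\<And>z. z \<in> Z \<Longrightarrow> Min Z \<le> z"
    by (auto intro: Min_in)
  define c where "c = Min Z"
  have "x < c" "c \<le> y" "poly p c = 0" using c unfolding c_def Z_def by auto
  obtain \<delta> where "\<delta> > 0" and right: "\<And>h. 0 < h \<Longrightarrow> h < \<delta> \<Longrightarrow> poly p x < poly p (x + h)"
    using DERIV_pos_inc_right[OF poly_DERIV pderiv_pos[of x]] assms by force
  define h where "h = min \<delta> (c - x) / 2"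
  have "0 < h" "h < \<delta>" "h < c - x" using \<open>\<delta> > 0\<close> \<open>x < c\<close> unfolding h_def by auto
  define t where "t = x + h"
  have t: "x < t" "t < c" "poly p t > 0"
    using right[of h] \<open>0 < h\<close> \<open>h < \<delta>\<close> \<open>h < c - x\<close> \<open>poly p x = 0\<close> unfolding t_def by auto
  obtain \<epsilon> where "\<epsilon> > 0" and left: "\<And>h. 0 < h \<Longrightarrow> h < \<epsilon> \<Longrightarrow> poly p (c - h) < poly p c"
    using DERIV_pos_inc_left[OF poly_DERIV pderiv_pos[of c]] \<open>x < c\<close> \<open>c \<le> y\<close> \<open>poly p c = 0\<close>
    by force
  define k where "k = min \<epsilon> (c - t) / 2"
  have "0 < k" "k < \<epsilon>" "k < c - t" using \<open>\<epsilon> > 0\<close> \<open>t < c\<close> unfolding k_def by auto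
  define s where "s = c - k"
  have s: "t < s" "s < c" "poly p s < 0"
    using left[of k] \<open>0 < k\<close> \<open>k < \<epsilon>\<close> \<open>k < c - t\<close> \<open>poly p c = 0\<close> unfolding s_def by auto
  obtain r where "t < r" "r < s" "poly p r = 0"
    using poly_IVT_neg[OF \<open>t < s\<close>] t s by blast
  then have "r \<in> Z" unfolding Z_def using t s \<open>c \<le> y\<close> by auto
  with c_min[of r] \<open>r < s\<close> \<open>s < c\<close> show False unfolding c_def by simp
qed

lemma poly_roots_eq_if_pderiv_pos:
  fixes p :: "real poly"
  assumes "p \<noteq> 0" "poly p x = 0" "poly p y = 0"
    and "\<And>z. min x y \<le> z \<Longrightarrow> z \<le> max x y \<Longrightarrow> poly p z = 0 \<Longrightarrow> poly (pderiv p) z > 0"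
  shows "x = y"
proof (rule linorder_cases[of x y])
  assume "x < y"
  then show ?thesis using no_two_roots_if_pderiv_pos_at_roots[of p x y] assms by simp
next
  assume "y < x"
  then show ?thesis using no_two_roots_if_pderiv_pos_at_roots[of p y x] assms by simp
qed

lemma order_eq_1_if_simple_root:
  fixes p :: "'a :: {idom, semiring_char_0} poly"
  assumes "poly p x = 0" "poly (pderiv p) x \<noteq> 0"
  shows "order x p = 1"
proof -
  have "p \<noteq> 0" using assms by auto
  then show ?thesis using order_pderiv[OF _ assms(1)] order_0I[OF assms(2)] by simp
qed

lemma sum_order_real_and_nonreal_roots:
  fixes q :: "complex poly"
  assumes "q \<noteq> 0"
  shows "(\<Sum>z\<in>{z. poly q z = 0 \<and> z \<in> \<real>}. order z q) + (\<Sum>z\<in>{z. poly q z = 0 \<and> z \<notin> \<real>}. order z q)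
       = degree q"
proof -
  have "(\<Sum>z\<in>{z. poly q z = 0 \<and> z \<in> \<real>}. order z q) + (\<Sum>z\<in>{z. poly q z = 0 \<and> z \<notin> \<real>}. order z q)
      = (\<Sum>z\<in>{z. poly q z = 0}. order z q)"
    using poly_roots_finite[OF assms] by (subst sum.union_disjoint[symmetric]) (auto intro: sum.cong)
  also have "\<dots> = size (proots q)"
    unfolding size_multiset_overloaded_eq using assms by simp
  finally show ?thesis by (simp add: size_proots_complex)
qed

lemma sum_order_real_roots_of_real_poly:
  fixes p :: "real poly"
  assumes "p \<noteq> 0" "\<And>x. poly p x = 0 \<Longrightarrow> poly (pderiv p) x \<noteq> 0"
  shows "(\<Sum>z\<in>{z. poly (map_poly complex_of_real p) z = 0 \<and> z \<in> \<real>}. order z (map_poly complex_of_real p))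
       = card {x. poly p x = 0}"
proof -
  have "{z. poly (map_poly complex_of_real p) z = 0 \<and> z \<in> \<real>} = of_real ` {x. poly p x = 0}"
    by (auto simp: poly_map_poly_of_real image_iff elim!: Reals_cases)
  then have "(\<Sum>z\<in>{z. poly (map_poly complex_of_real p) z = 0 \<and> z \<in> \<real>}. order z (map_poly complex_of_real p))
      = (\<Sum>x\<in>{x. poly p x = 0}. order (complex_of_real x) (map_poly complex_of_real p))"
    by (simp add: sum.reindex inj_on_def)
  also have "\<dots> = (\<Sum>x\<in>{x. poly p x = 0}. 1)"
    using assms(2) by (intro sum.cong refl order_eq_1_if_simple_root)
      (simp_all add: poly_map_poly_of_real pderiv_map_poly_of_real)
  finally show ?thesis by simp
qed

definition kh_quartic_real :: "real \<Rightarrow> real \<Rightarrow> real \<Rightarrow> real poly" where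
  "kh_quartic_real N d A = [:1, - N:] ^ 2 * [:- (1 + d^2), 0, 1:] + smult A [:-1, 0, 1:]"

lemma kh_quartic_real_coeffs:
  "kh_quartic_real N d A = [: -(1+d^2) - A, 2*N*(1+d^2), 1 - (1+d^2)*N^2 + A, -2*N, N^2 :]"
  unfolding kh_quartic_real_def by (simp add: power2_eq_square algebra_simps)

lemma kh_quartic_eq_map_poly: "kh_quartic N d A = map_poly complex_of_real (kh_quartic_real N d A)"
proof -
  have "kh_quartic N d A = [: of_real (-(1+d^2) - A), of_real (2*N*(1+d^2)),
      of_real (1 - (1+d^2)*N^2 + A), of_real (-2*N), of_real (N^2) :]"
    unfolding kh_quartic_def by (simp add: power2_eq_square algebra_simps)
  then show ?thesis
    unfolding kh_quartic_real_coeffs by (simp add: map_poly_pCons)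
qed

lemma poly_kh_quartic_real:
  "poly (kh_quartic_real N d A) x = (1 - N*x)^2 * (x^2 - 1 - d^2) + A * (x^2 - 1)"
  unfolding kh_quartic_real_def by (simp add: algebra_simps power2_eq_square)

text \<open>The left-hand side is (x^2 - 1)^2 times the derivative of P / (x^2 - 1) = F + A.\<close>
lemma poly_pderiv_kh_quartic_real:
  "(x^2 - 1) * poly (pderiv (kh_quartic_real N d A)) x - 2*x * poly (kh_quartic_real N d A) x
     = 2 * (1 - N*x) * (d^2 * (x - N) - N * (x^2 - 1)^2)"
  unfolding kh_quartic_real_coeffs by (simp add: pderiv_pCons algebra_simps power2_eq_square power4_eq_xxxx)

context
  fixes N d A :: real
  assumes N_pos: "0 < N" and N_lt_1: "N < 1" and d_pos: "0 < d" and A_pos: "0 < A"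
begin

lemma kh_quartic_real_neg_if_abs_le_1:
  assumes "\<bar>x\<bar> \<le> 1"
  shows "poly (kh_quartic_real N d A) x < 0"
proof -
  have "x^2 \<le> 1" using assms by (simp add: abs_square_le_1)
  have "0 < d^2" using d_pos by simp
  have "N * x \<le> N * 1" using N_pos assms by (intro mult_left_mono) (auto simp: abs_le_iff)
  then have "N * x < 1" using N_lt_1 by linarith
  moreover have "x^2 - 1 - d^2 < 0" using \<open>x^2 \<le> 1\<close> \<open>0 < d^2\<close> by linarith
  ultimately have "(1 - N*x)^2 * (x^2 - 1 - d^2) < 0" by (intro mult_pos_neg) auto
  moreover have "A * (x^2 - 1) \<le> 0" using A_pos \<open>x^2 \<le> 1\<close> by (simp add: mult_nonneg_nonpos)
  ultimately show ?thesis by (simp add: poly_kh_quartic_real)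
qed

lemma kh_quartic_real_pos_if_sq_ge:
  assumes "1 + d^2 \<le> x^2"
  shows "poly (kh_quartic_real N d A) x > 0"
proof -
  have "0 < d^2" using d_pos by simp
  then have "0 < x^2 - 1" using assms by linarith
  then have "A * (x^2 - 1) > 0" using A_pos by simp
  moreover have "(1 - N*x)^2 * (x^2 - 1 - d^2) \<ge> 0" using assms by simp
  ultimately show ?thesis by (simp add: poly_kh_quartic_real)
qed

lemma kh_quartic_real_root_bounds:
  assumes "poly (kh_quartic_real N d A) x = 0"
  shows "1 < \<bar>x\<bar>" and "x^2 < 1 + d^2"
  using kh_quartic_real_neg_if_abs_le_1[of x] kh_quartic_real_pos_if_sq_ge[of x] assms
  by (auto simp flip: not_le)

lemma pderiv_kh_quartic_real_neg_at_neg_root: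
  assumes "poly (kh_quartic_real N d A) x = 0" and "x < 0"
  shows "poly (pderiv (kh_quartic_real N d A)) x < 0"
proof -
  have "1 < x^2"
    using kh_quartic_real_root_bounds(1)[OF assms(1)] one_less_power[of "\<bar>x\<bar>" 2] by simp
  have "d^2 * (x - N) \<le> 0" using N_pos \<open>x < 0\<close> by (simp add: mult_nonneg_nonpos)
  moreover have "0 < N * (x^2 - 1)^2" using N_pos \<open>1 < x^2\<close> by simp
  ultimately have "d^2 * (x - N) - N * (x^2 - 1)^2 < 0" by linarith
  moreover have "0 < 1 - N*x" using mult_pos_neg[OF N_pos \<open>x < 0\<close>] by linarith
  ultimately have "(x^2 - 1) * poly (pderiv (kh_quartic_real N d A)) x < 0"
    using poly_pderiv_kh_quartic_real[of x N d A] assms(1) by (simp add: mult_pos_neg)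
  then show ?thesis using \<open>1 < x^2\<close> by (simp add: mult_less_0_iff)
qed

lemma pderiv_kh_quartic_real_pos_at_pos_root:
  assumes "N^2 * (1 + d^2) \<le> 1" and "poly (kh_quartic_real N d A) x = 0" and "0 < x"
  shows "poly (pderiv (kh_quartic_real N d A)) x > 0"
proof -
  have "1 < x" and "x^2 < 1 + d^2"
    using kh_quartic_real_root_bounds[OF assms(2)] \<open>0 < x\<close> by auto
  have "(N*x)^2 = N^2 * x^2" by (simp add: power_mult_distrib)
  also have "\<dots> < N^2 * (1 + d^2)" using \<open>x^2 < 1 + d^2\<close> N_pos by simp
  finally have "(N * x)^2 < 1" using assms(1) by linarith
  then have "N * x < 1" by (simp add: abs_square_less_1 abs_less_iff)
  have "0 < x^2 - 1" using one_less_power[OF \<open>1 < x\<close>, of 2] by simp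
  then have "(x^2 - 1)^2 < d^2 * (x^2 - 1)"
    using \<open>x^2 < 1 + d^2\<close> by (simp add: power2_eq_square[of "x^2 - 1"])
  then have "N * (x^2 - 1)^2 < N * (d^2 * (x^2 - 1))" using N_pos by simp
  also have "\<dots> = d^2 * (x - N) - d^2 * x * (1 - N*x)" by (simp add: algebra_simps power2_eq_square)
  moreover have "0 < d^2 * x * (1 - N*x)" using \<open>N * x < 1\<close> \<open>0 < x\<close> d_pos by simp
  ultimately have "0 < d^2 * (x - N) - N * (x^2 - 1)^2" by linarith
  then have "0 < (x^2 - 1) * poly (pderiv (kh_quartic_real N d A)) x"
    using poly_pderiv_kh_quartic_real[of x N d A] assms(2) \<open>N * x < 1\<close> by simp
  then show ?thesis using \<open>0 < x^2 - 1\<close> by (simp add: zero_less_mult_iff)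
qed

lemma kh_quartic_real_nonzero: "kh_quartic_real N d A \<noteq> 0"
  using kh_quartic_real_neg_if_abs_le_1[of 0] by auto

lemma degree_kh_quartic_real: "degree (kh_quartic_real N d A) = 4"
  using N_pos by (simp add: kh_quartic_real_coeffs)

lemma kh_quartic_real_has_two_roots:
  assumes "N^2 * (1 + d^2) \<le> 1"
  shows "card {x. poly (kh_quartic_real N d A) x = 0} = 2"
proof -
  define p where "p = kh_quartic_real N d A"
  define s where "s = sqrt (1 + d^2)"
  have "1 < s" using d_pos unfolding s_def by (simp add: real_less_rsqrt)
  have "s^2 = 1 + d^2" unfolding s_def by simp
  then have "poly p s > 0" "poly p (-s) > 0"
    unfolding p_def using kh_quartic_real_pos_if_sq_ge by simp_all
  moreover have "poly p 1 < 0" "poly p (-1) < 0"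
    unfolding p_def using kh_quartic_real_neg_if_abs_le_1 by simp_all
  ultimately obtain r1 r2 where r1: "r1 < -1" "poly p r1 = 0" and r2: "1 < r2" "poly p r2 = 0"
    using poly_IVT_neg[of "-s" "-1" p] poly_IVT_pos[of 1 s p] \<open>1 < s\<close> by (meson neg_less_iff_less)
  have "p \<noteq> 0" unfolding p_def by (rule kh_quartic_real_nonzero)
  have neg_root_unique: "x = r1" if "poly p x = 0" "x < 0" for x
  proof (rule poly_roots_eq_if_pderiv_pos[of "-p"])
    fix z assume "z \<le> max x r1" "poly (-p) z = 0"
    then show "poly (pderiv (-p)) z > 0"
      using pderiv_kh_quartic_real_neg_at_neg_root[of z] \<open>x < 0\<close> \<open>r1 < -1\<close>
      unfolding p_def by (simp add: pderiv_minus)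
  qed (use \<open>p \<noteq> 0\<close> that r1 in auto)
  have pos_root_unique: "x = r2" if "poly p x = 0" "0 < x" for x
  proof (rule poly_roots_eq_if_pderiv_pos[of p])
    fix z assume "min x r2 \<le> z" "poly p z = 0"
    then show "poly (pderiv p) z > 0"
      using pderiv_kh_quartic_real_pos_at_pos_root[OF assms, of z] \<open>0 < x\<close> \<open>1 < r2\<close>
      unfolding p_def by simp
  qed (use \<open>p \<noteq> 0\<close> that r2 in auto)
  have "poly p 0 \<noteq> 0" unfolding p_def using kh_quartic_real_neg_if_abs_le_1[of 0] by simp
  have "{x. poly p x = 0} = {r1, r2}"
  proof (intro set_eqI iffI)
    fix x assume "x \<in> {x. poly p x = 0}"
    then have "poly p x = 0" by simp
    with \<open>poly p 0 \<noteq> 0\<close> have "x < 0 \<or> 0 < x" by (cases "x = 0") auto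
    then show "x \<in> {r1, r2}" using neg_root_unique pos_root_unique \<open>poly p x = 0\<close> by blast
  qed (use r1 r2 in auto)
  moreover have "r1 \<noteq> r2" using r1 r2 by simp
  ultimately show ?thesis unfolding p_def by simp
qed

lemma kh_quartic_real_simple_roots:
  assumes "N^2 * (1 + d^2) \<le> 1" and "poly (kh_quartic_real N d A) x = 0"
  shows "poly (pderiv (kh_quartic_real N d A)) x \<noteq> 0"
proof (cases "x < 0")
  case True
  then show ?thesis using pderiv_kh_quartic_real_neg_at_neg_root[OF assms(2)] by simp
next
  case False
  then have "0 < x" using kh_quartic_real_root_bounds(1)[OF assms(2)] by simp
  then show ?thesis using pderiv_kh_quartic_real_pos_at_pos_root[OF assms] by simp
qed

end

theorem proposition1:
  fixes N d A :: real
  assumes "0 < N" and "N < 1" and "0 < d" and "d^2 \<le> 1 / N^2 - 1" and "0 < A"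
  shows "(\<Sum>z\<in>{z. poly (kh_quartic N d A) z = 0 \<and> z \<in> \<real>}. order z (kh_quartic N d A)) = 2
       \<and> (\<Sum>z\<in>{z. poly (kh_quartic N d A) z = 0 \<and> z \<notin> \<real>}. order z (kh_quartic N d A)) = 2"
proof -
  have "N^2 * d^2 \<le> N^2 * (1 / N^2 - 1)" using assms(4) by (simp add: mult_left_mono)
  also have "\<dots> = 1 - N^2" using assms(1) by (simp add: field_simps)
  finally have N_d_bound: "N^2 * (1 + d^2) \<le> 1" by (simp add: algebra_simps)
  note quartic = kh_quartic_real_nonzero kh_quartic_real_simple_roots[OF _ _ _ _ N_d_bound]
    kh_quartic_real_has_two_roots[OF _ _ _ _ N_d_bound] degree_kh_quartic_real
  note quartic = quartic[OF assms(1,2,3,5)]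
  have real_roots: "(\<Sum>z\<in>{z. poly (kh_quartic N d A) z = 0 \<and> z \<in> \<real>}. order z (kh_quartic N d A)) = 2"
    unfolding kh_quartic_eq_map_poly using sum_order_real_roots_of_real_poly quartic(1-3) by metis
  have "degree (kh_quartic N d A) = 4"
    unfolding kh_quartic_eq_map_poly using quartic(4) by (simp add: degree_map_poly)
  moreover from this have "kh_quartic N d A \<noteq> 0" by auto
  ultimately show ?thesis
    using sum_order_real_and_nonreal_roots[of "kh_quartic N d A"] real_roots by simp
qed

end
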